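(* Let $\{S_t\}_{t=1}^T$ be a latent homogeneous first-order Markov chain on $\{1,\dots,K\}$ and let $\mathbf{Y}_t=[Y_t^{(1)},\dots,Y_t^{(d)}]'$ be a $d$-dimensional random vector. Fix $t$ and a state $k$, and suppose that, conditionally on $S_t=k$, $\mathbf{Y}_t \sim \mathcal{GH}_d(\boldsymbol\mu_k,\boldsymbol\Sigma_k,\lambda_k,\chi_k,\psi_k)$. Let $\boldsymbol\Theta_k=\boldsymbol\Sigma_k^{-1}$ and let $G_k=(V,E_k)$ be the undirected graph with vertex set $V=\{1,\dots,d\}$ and edge set $E_k=\{(j,h): j\neq h,\ \Theta_{k,j,h}\neq 0\}$, where $\Theta_{k,j,h}$ is the $(j,h)$ entry of $\boldsymbol\Theta_k$. If two nodes $j,h\in V$, $j\neq h$, are separated in $G_k$ by a set of nodes $C\subseteq V\setminus\{j,h\}$ (i.e., every path in $G_k$ from $j$ to $h$ passes through a vertex of $C$), then $Y_t^{(j)}$ and $Y_t^{(h)}$ are conditionally uncorrelated given $\mathbf{Y}_t^{(C)}=(Y_t^{(i)})_{i\in C}$ and $S_t=k$.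
   Context: The (symmetric) multivariate generalized hyperbolic distribution $\mathcal{GH}_d(\boldsymbol\mu,\boldsymbol\Sigma,\lambda,\chi,\psi)$, with $\boldsymbol\mu\in\mathbb{R}^d$, $\boldsymbol\Sigma$ a $d\times d$ symmetric positive definite matrix with $|\boldsymbol\Sigma|=1$, $\lambda\in\mathbb{R}$, $\chi>0$, $\psi>0$, has density $$f(\mathbf{y})=\frac{1}{(2\pi)^{d/2}|\boldsymbol\Sigma|^{1/2}K_\lambda(\sqrt{\psi\chi})}\left[\frac{\chi+\delta(\mathbf{y})}{\psi}\right]^{\frac{\lambda-d/2}{2}}K_{\lambda-d/2}\left(\sqrt{[\chi+\delta(\mathbf{y})]\psi}\right),$$ where $\delta(\mathbf{y})=(\mathbf{y}-\boldsymbol\mu)'\boldsymbol\Sigma^{-1}(\mathbf{y}-\boldsymbol\mu)$ and $K_\nu$ is the modified Bessel function of the third kind of order $\nu$. Equivalently, $\mathbf{Y}=\boldsymbol\mu+\sqrt{W}\boldsymbol\Sigma^{1/2}\mathbf{Z}$ with $\mathbf{Z}\sim\mathcal{N}_d(\mathbf{0},\mathbf{I}_d)$ independent of $W\sim\mathcal{GIG}(\lambda,\chi,\psi)$ (generalized inverse Gaussian), so that $\mathbf{Y}\mid W=w\sim\mathcal{N}_d(\boldsymbol\mu,w\boldsymbol\Sigma)$. "Conditionally uncorrelated given $\mathbf{Y}_t^{(C)}$ and $S_t=k$" means that the conditional covariance of $Y_t^{(j)}$ and $Y_t^{(h)}$ given $\mathbf{Y}_t^{(C)}$ and $S_t=k$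 is zero. *)

theory Defs
  imports "HOL-Probability.Probability"
begin

definition besselK :: "real \<Rightarrow> real \<Rightarrow> real" where
  "besselK \<nu> x = (LBINT u:{0..}. exp (- x * cosh u) * cosh (\<nu> * u))"

definition sym_pos_def :: "real^'d^'d \<Rightarrow> bool" where
  "sym_pos_def A \<longleftrightarrow> transpose A = A \<and> (\<forall>x. x \<noteq> 0 \<longrightarrow> x \<bullet> (A *v x) > 0)"

definition GH_density ::
  "real^'d \<Rightarrow> real^'d^'d \<Rightarrow> real \<Rightarrow> real \<Rightarrow> real \<Rightarrow> real^'d \<Rightarrow> real" where
  "GH_density \<mu> \<Sigma> lam chi psi y =
     (let d = real CARD('d);
          \<delta> = (y - \<mu>) \<bullet> (matrix_inv \<Sigma> *v (y - \<mu>))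
      in 1 / ((2 * pi) powr (d / 2) * sqrt (det \<Sigma>) * besselK lam (sqrt (psi * chi)))
         * ((chi + \<delta>) / psi) powr ((lam - d / 2) / 2)
         * besselK (lam - d / 2) (sqrt ((chi + \<delta>) * psi)))"

definition hom_markov_chain :: "'a measure \<Rightarrow> (nat \<Rightarrow> 'a \<Rightarrow> nat) \<Rightarrow> nat \<Rightarrow> nat \<Rightarrow> bool" where
  "hom_markov_chain M S T K \<longleftrightarrow>
     (\<forall>t\<in>{1..T}. S t \<in> measurable M (count_space UNIV) \<and> (\<forall>\<omega>\<in>space M. S t \<omega> \<in> {1..K})) \<and>
     (\<exists>P :: nat \<Rightarrow> nat \<Rightarrow> real. \<forall>t. 1 \<le> t \<longrightarrow> t < T \<longrightarrow> (\<forall>s :: nat \<Rightarrow> nat.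
        measure M {\<omega>\<in>space M. \<forall>i\<in>{1..Suc t}. S i \<omega> = s i}
        = measure M {\<omega>\<in>space M. \<forall>i\<in>{1..t}. S i \<omega> = s i} * P (s t) (s (Suc t))))"

(* undirected graph G = (V, E) with V = UNIV :: 'd set and E = {(j,h). j \<noteq> h \<and> Theta_jh \<noteq> 0} *)
definition precision_edge :: "real^'d^'d \<Rightarrow> 'd \<Rightarrow> 'd \<Rightarrow> bool" where
  "precision_edge \<Theta> j h \<longleftrightarrow> j \<noteq> h \<and> \<Theta> $ j $ h \<noteq> 0"

definition is_path :: "('d \<Rightarrow> 'd \<Rightarrow> bool) \<Rightarrow> 'd list \<Rightarrow> 'd \<Rightarrow> 'd \<Rightarrow> bool" where
  "is_path E ps j h \<longleftrightarrow> ps \<noteq> [] \<and> hd ps = j \<and> last ps = h \<and> distinct ps \<and>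
     (\<forall>i. Suc i < length ps \<longrightarrow> E (ps ! i) (ps ! Suc i))"

definition separates :: "('d \<Rightarrow> 'd \<Rightarrow> bool) \<Rightarrow> 'd set \<Rightarrow> 'd \<Rightarrow> 'd \<Rightarrow> bool" where
  "separates E C j h \<longleftrightarrow> (\<forall>ps. is_path E ps j h \<longrightarrow> set ps \<inter> C \<noteq> {})"

definition coord_sigma :: "'a measure \<Rightarrow> ('a \<Rightarrow> real^'d) \<Rightarrow> 'd set \<Rightarrow> 'a measure" where
  "coord_sigma M Y C = sigma (space M)
     (\<Union>i\<in>C. {(\<lambda>\<omega>. Y \<omega> $ i) -` B \<inter> space M | B. B \<in> sets borel})"

definition cond_cov :: "'a measure \<Rightarrow> 'a measure \<Rightarrow> ('a \<Rightarrow> real) \<Rightarrow> ('a \<Rightarrow> real) \<Rightarrow> 'a \<Rightarrow> real" where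
  "cond_cov M F X Z \<omega> =
     real_cond_exp M F (\<lambda>x. X x * Z x) \<omega> - real_cond_exp M F X \<omega> * real_cond_exp M F Z \<omega>"

end

(*
  Put Theta = inverse (Sigma k) and let D be the set of vertices reachable from j by paths
  avoiding C.  Separation gives h \<notin> D, and the entries of Theta between D and the vertices
  outside D and C vanish.  Let P be the Theta-orthogonal projection onto the coordinates in D and
  R = I - 2 P the corresponding reflection.  R preserves the quadratic form y' Theta y and, being
  a linear involution, preserves Lebesgue measure; as the GH density is a function of
  (y - mu)' Theta (y - mu), the law of Y is invariant under T y = mu + R (y - mu).  T fixes every
  coordinate outside D, in particular those in C and h, while by the zero pattern of Theta,
  Y_j + (T Y)_j = 2 m (Y_C) for an affine function m.  Hence, given Y_C, the pairs (Y_j, Y_h)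
  and (2 m - Y_j, Y_h) have the same law, so E[Y_j | Y_C] = m and E[Y_j Y_h | Y_C] = m E[Y_h | Y_C].
  The exponential tails of the GH density provide the second moments.
*)

theory Submission
  imports Defs "HOL-Real_Asymp.Real_Asymp"
begin

section \<open>Lebesgue measure under linear maps\<close>

lemma borel_measurable_linear:
  fixes f :: "'a::euclidean_space \<Rightarrow> 'b::euclidean_space"
  assumes "linear f"
  shows "f \<in> borel_measurable borel"
  using assms by (intro borel_measurable_continuous_onI linear_continuous_on)
    (simp add: linear_conv_bounded_linear)

lemma lborel_distr_linear_volume_preserving:
  fixes f g :: "'a::euclidean_space \<Rightarrow> 'a"
  assumes f: "linear f" and g: "linear g" and gf: "\<And>x. g (f x) = x" and fg: "\<And>x. f (g x) = x"
    and vol: "\<And>a b. measure lebesgue (f ` cbox a b) = measure lebesgue (cbox a b)"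
  shows "distr lborel borel f = lborel"
proof -
  note [measurable] = borel_measurable_linear[OF f] borel_measurable_linear[OF g]
  have "lborel = distr lborel borel g"
  proof (rule lborel_eqI)
    fix l u :: 'a
    assume "\<And>b. b \<in> Basis \<Longrightarrow> l \<bullet> b \<le> u \<bullet> b"
    then have box: "emeasure lborel (box l u) = (\<Prod>b\<in>Basis. (u - l) \<bullet> b)"
      by (simp add: emeasure_lborel_box_eq)
    have pre: "g -` box l u = f ` box l u"
      using gf fg by (auto intro: rev_image_eqI)
    have "f ` box l u \<in> sets borel"
      using measurable_sets_borel[OF borel_measurable_linear[OF g], of "box l u"] pre by simp
    moreover have "measure lebesgue (f ` box l u) = measure lebesgue (box l u)"
      using measure_linear_sufficient[OF f, of "box l u" 1] vol by simp
    ultimately have "measure lborel (f ` box l u) = measure lborel (box l u)"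
      by (simp add: measure_completion)
    moreover have "emeasure lborel (f ` box l u) < \<infinity>"
      using f by (intro emeasure_bounded_finite bounded_linear_image) (auto simp: linear_conv_bounded_linear)
    ultimately have "emeasure lborel (f ` box l u) = emeasure lborel (box l u)"
      using emeasure_lborel_box_finite[of l u] by (simp add: emeasure_eq_ennreal_measure)
    then show "emeasure (distr lborel borel g) (box l u) = (\<Prod>b\<in>Basis. (u - l) \<bullet> b)"
      by (simp add: emeasure_distr pre box)
  qed simp
  then have "distr lborel borel f = distr (distr lborel borel g) borel f"
    by simp
  also have "\<dots> = lborel"
    by (simp add: distr_distr comp_def fg distr_id2 cong: distr_cong)
  finally show ?thesis .
qed

lemma lborel_distr_swap:
  "distr lborel borel (\<lambda>x::real^'n. \<chi> i. x $ Transposition.transpose m n i) = lborel"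
proof -
  let ?f = "\<lambda>x::real^'n. \<chi> i. x $ Transposition.transpose m n i"
  have lin: "linear ?f"
    by (rule linearI) (simp_all add: vec_eq_iff)
  have inv: "?f (?f x) = x" for x
    by (simp add: vec_eq_iff)
  have "measure lebesgue (?f ` cbox a b) = measure lebesgue (cbox a b)" for a b
  proof (cases "cbox a b = {}")
    case False
    have image: "?f ` cbox a b = cbox (?f a) (?f b)"
      by (auto simp: image_iff lambda_swap_Galois mem_box_cart) (metis transpose_involutory)+
    with False have "cbox (?f a) (?f b) \<noteq> {}"
      by auto
    moreover have "(\<Prod>i\<in>UNIV. (?f b - ?f a) $ i) = (\<Prod>i\<in>UNIV. (b - a) $ i)"
      using prod.permute[OF permutes_swap_id[of m UNIV n], of "\<lambda>i. (b - a) $ i"]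
      by (simp add: comp_def)
    ultimately show ?thesis
      using False by (simp add: image content_cbox_cart)
  qed simp
  then show ?thesis
    using lborel_distr_linear_volume_preserving[OF lin lin inv inv] by blast
qed

lemma lborel_distr_shear:
  assumes "m \<noteq> n"
  shows "distr lborel borel (\<lambda>x::real^'n. \<chi> i. if i = m then x $ m + x $ n else x $ i) = lborel"
proof (rule lborel_distr_linear_volume_preserving)
  let ?f = "\<lambda>x::real^'n. \<chi> i. if i = m then x $ m + x $ n else x $ i"
  let ?g = "\<lambda>x::real^'n. \<chi> i. if i = m then x $ m - x $ n else x $ i"
  show lin: "linear ?f"
    by (rule linearI) (simp_all add: vec_eq_iff algebra_simps)
  show "linear ?g"
    by (rule linearI) (simp_all add: vec_eq_iff algebra_simps)
  show "?g (?f x) = x" "?f (?g x) = x" for x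
    using assms by (simp_all add: vec_eq_iff)
  fix a b :: "real^'n"
  show "measure lebesgue (?f ` cbox a b) = measure lebesgue (cbox a b)"
  proof (cases "cbox a b = {}")
    case False
    \<comment> \<open>measure_shear_interval wants a box whose lower corner has nonnegative n-th coordinate\<close>
    define v :: "real^'n" where "v = axis n (a $ n)"
    have box: "cbox a b = (+) v ` cbox (a - v) (b - v)"
      using cbox_translation[of v "a - v" "b - v"] by simp
    have "?f ` cbox a b = (+) (?f v) ` ?f ` cbox (a - v) (b - v)"
      unfolding box image_image using linear_add[OF lin] by simp
    then have "measure lebesgue (?f ` cbox a b) = measure lebesgue (?f ` cbox (a - v) (b - v))"
      by (simp add: measure_translation)
    also have "\<dots> = measure lebesgue (cbox (a - v) (b - v))"
      using False assms box by (intro measure_shear_interval) (auto simp: v_def)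
    also have "\<dots> = measure lebesgue (cbox a b)"
      by (simp add: box measure_translation)
    finally show ?thesis .
  qed simp
qed

lemma lborel_eq_density_distr_stretch:
  fixes c :: "'n::finite \<Rightarrow> real"
  assumes c: "\<And>i. c i \<noteq> 0"
  shows "lborel = density (distr lborel borel (\<lambda>x::real^'n. \<chi> i. c i * x $ i))
                   (\<lambda>_. ennreal \<bar>\<Prod>i\<in>UNIV. c i\<bar>)"
proof -
  have Basis: "(Basis :: (real^'n) set) = range (\<lambda>i. axis i 1)"
    by (auto simp: Basis_vec_def)
  have "(\<Sum>j\<in>Basis. (c (axis_index j) * (x \<bullet> j)) *\<^sub>R j) = (\<chi> i. c i * x $ i)" for x :: "real^'n"
    by (simp flip: vector_cart add: cart_eq_inner_axis)
  moreover have "(\<Prod>j\<in>Basis. \<bar>c (axis_index (j::real^'n))\<bar>) = \<bar>\<Prod>i\<in>UNIV. c i\<bar>"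
    unfolding Basis by (subst prod.reindex) (auto simp: inj_on_def axis_eq_axis abs_prod)
  ultimately show ?thesis
    using lborel_affine_euclidean[where c = "\<lambda>j::real^'n. c (axis_index j)" and t = 0] c
    by simp
qed

lemma abs_det_matrix_involution:
  fixes f :: "real^'n \<Rightarrow> real^'n"
  assumes f: "linear f" and inv: "\<And>x. f (f x) = x"
  shows "\<bar>det (matrix f)\<bar> = 1"
proof -
  have "matrix f ** matrix f = mat 1"
    using matrix_compose[OF f f] inv by (simp add: comp_def matrix_id_mat_1 flip: id_def)
  then have "(det (matrix f))\<^sup>2 = 1"
    by (metis det_I det_mul power2_eq_square)
  then show ?thesis
    by (auto simp: power2_eq_1_iff)
qed

lemma det_matrix_shear:
  assumes "m \<noteq> n"
  shows "det (matrix (\<lambda>x::real^'n. \<chi> i. if i = m then x $ m + x $ n else x $ i)) = 1"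
proof -
  have "matrix (\<lambda>x::real^'n. \<chi> i. if i = m then x $ m + x $ n else x $ i)
      = (\<chi> k. if k = m then row m (mat 1) + 1 *s row n (mat 1) else row k (mat 1))"
    by (auto simp: vec_eq_iff matrix_def row_def mat_def axis_def)
  then show ?thesis
    using det_row_operation[OF assms, of "mat 1 :: real^'n^'n" 1] by simp
qed

lemma lborel_eq_density_distr_comp:
  fixes f g :: "real^'n \<Rightarrow> real^'n"
  assumes f: "linear f" and g: "linear g"
    and lf: "lborel = density (distr lborel borel f) (\<lambda>_. ennreal a)"
    and lg: "lborel = density (distr lborel borel g) (\<lambda>_. ennreal b)"
    and "0 \<le> a" "0 \<le> b"
  shows "lborel = density (distr lborel borel (f \<circ> g)) (\<lambda>_. ennreal (a * b))"
proof -
  note [measurable] = borel_measurable_linear[OF f] borel_measurable_linear[OF g]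
  have "distr lborel borel f = distr (density (distr lborel borel g) (\<lambda>_. ennreal b)) borel f"
    by (rule arg_cong[where f = "\<lambda>M. distr M borel f", OF lg])
  also have "\<dots> = density (distr lborel borel (f \<circ> g)) (\<lambda>_. ennreal b)"
    by (simp add: density_distr distr_distr)
  finally show ?thesis
    using lf assms(5,6) by (simp add: density_density_eq ennreal_mult mult.commute)
qed

(* Unlike the library's measure_linear_image, this needs no well-ordering of the index type. *)
theorem lborel_eq_density_distr_linear:
  fixes f :: "real^'n \<Rightarrow> real^'n"
  assumes "linear f" and "det (matrix f) \<noteq> 0"
  shows "lborel = density (distr lborel borel f) (\<lambda>_. ennreal \<bar>det (matrix f)\<bar>)"
proof -
  let ?P = "\<lambda>f. det (matrix f) \<noteq> 0 \<longrightarrow>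
              lborel = density (distr lborel borel f) (\<lambda>_. ennreal \<bar>det (matrix f)\<bar>)"
  have "?P f"
  proof (rule induct_linear_elementary[OF \<open>linear f\<close>])
    fix f g :: "real^'n \<Rightarrow> real^'n"
    assume f: "linear f" and g: "linear g" and "?P f" "?P g"
    have "det (matrix (f \<circ> g)) = det (matrix f) * det (matrix g)"
      by (simp add: matrix_compose[OF g f] det_mul)
    then show "?P (f \<circ> g)"
      using lborel_eq_density_distr_comp[OF f g] \<open>?P f\<close> \<open>?P g\<close> by (simp add: abs_mult)
  next
    fix f :: "real^'n \<Rightarrow> real^'n" and i
    assume "\<And>x. f x $ i = 0"
    then have "row i (matrix f) = 0"
      by (simp add: row_def matrix_def vec_eq_iff)
    then show "?P f"
      by (simp add: det_zero_row)
  next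
    fix c :: "'n \<Rightarrow> real"
    have "det (matrix (\<lambda>x::real^'n. \<chi> i. c i * x $ i)) = (\<Prod>i\<in>UNIV. c i)"
      by (simp add: matrix_def axis_def det_diagonal)
    then show "?P (\<lambda>x. \<chi> i. c i * x $ i)"
      using lborel_eq_density_distr_stretch[of c] by auto
  next
    fix m n :: 'n
    let ?f = "\<lambda>x::real^'n. \<chi> i. x $ Transposition.transpose m n i"
    have "\<bar>det (matrix ?f)\<bar> = 1"
      by (rule abs_det_matrix_involution) (auto intro!: linearI simp: vec_eq_iff)
    then show "?P ?f"
      using lborel_distr_swap[of m n] by (simp add: density_1)
  next
    fix m n :: 'n
    assume "m \<noteq> n"
    then show "?P (\<lambda>x. \<chi> i. if i = m then x $ m + x $ n else x $ i)"
      by (simp add: lborel_distr_shear det_matrix_shear density_1)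
  qed
  with assms show ?thesis
    by blast
qed

section \<open>Orthogonal projection and reflection for a quadratic form\<close>

definition vec_restrict :: "'n set \<Rightarrow> 'a::zero^'n \<Rightarrow> 'a^'n" where
  "vec_restrict D x = (\<chi> i. if i \<in> D then x $ i else 0)"

definition quad_proj :: "real^'n^'n \<Rightarrow> 'n set \<Rightarrow> real^'n \<Rightarrow> real^'n" where
  "quad_proj \<Theta> D x =
     (SOME p. (\<forall>i. i \<notin> D \<longrightarrow> p $ i = 0) \<and> (\<forall>a\<in>D. (\<Theta> *v (x - p)) $ a = 0))"

definition quad_reflect :: "real^'n^'n \<Rightarrow> 'n set \<Rightarrow> real^'n \<Rightarrow> real^'n" where
  "quad_reflect \<Theta> D x = x - 2 *\<^sub>R quad_proj \<Theta> D x"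

lemma vec_restrict_nth [simp]: "vec_restrict D x $ i = (if i \<in> D then x $ i else 0)"
  by (simp add: vec_restrict_def)

lemma linear_vec_restrict: "linear (vec_restrict D :: real^'n \<Rightarrow> real^'n)"
  by (rule linearI) (simp_all add: vec_eq_iff)

lemma sym_pos_def_block_kernel_trivial:
  fixes \<Theta> :: "real^'n^'n"
  assumes "sym_pos_def \<Theta>"
    and "\<And>i. i \<notin> D \<Longrightarrow> q $ i = 0" and "\<And>a. a \<in> D \<Longrightarrow> (\<Theta> *v q) $ a = 0"
  shows "q = 0"
proof -
  have "q \<bullet> (\<Theta> *v q) = (\<Sum>i\<in>UNIV. q $ i * (\<Theta> *v q) $ i)"
    by (simp add: inner_vec_def)
  also have "\<dots> = 0"
    using assms(2,3) by (intro sum.neutral) (metis mult_eq_0_iff)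
  finally show ?thesis
    using assms(1) unfolding sym_pos_def_def by fastforce
qed

lemma quad_proj_exists:
  fixes \<Theta> :: "real^'n^'n"
  assumes "sym_pos_def \<Theta>"
  shows "\<exists>p. (\<forall>i. i \<notin> D \<longrightarrow> p $ i = 0) \<and> (\<forall>a\<in>D. (\<Theta> *v (x - p)) $ a = 0)"
proof -
  \<comment> \<open>the principal block of \<open>\<Theta>\<close> on D, extended by the identity: injective, hence onto\<close>
  define pad where "pad p = vec_restrict D (\<Theta> *v vec_restrict D p) + vec_restrict (- D) p" for p
  have "linear pad"
    by (rule linearI) (simp_all add: pad_def vec_eq_iff matrix_vector_right_distrib
        matrix_vector_mult_scaleR linear_add[OF linear_vec_restrict] linear_scale[OF linear_vec_restrict])
  moreover have "inj pad"
  proof (rule linear_inj_iff_eq_0[THEN iffD2, OF \<open>linear pad\<close>], intro allI impI)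
    fix q assume q: "pad q = 0"
    then have off: "q $ i = 0" if "i \<notin> D" for i
      using that by (auto simp: pad_def vec_eq_iff dest: spec[of _ i])
    then have "vec_restrict D q = q"
      by (auto simp: vec_eq_iff)
    with q have "(\<Theta> *v q) $ a = 0" if "a \<in> D" for a
      using that by (auto simp: pad_def vec_eq_iff dest: spec[of _ a])
    with off show "q = 0"
      using sym_pos_def_block_kernel_trivial[OF assms] by blast
  qed
  ultimately obtain q where q: "pad q = vec_restrict D (\<Theta> *v x)"
    by (metis linear_injective_imp_surjective surjE)
  then have off: "q $ i = 0" if "i \<notin> D" for i
    using that by (auto simp: pad_def vec_eq_iff dest: spec[of _ i])
  then have "vec_restrict D q = q"
    by (auto simp: vec_eq_iff)
  with q have "(\<Theta> *v (x - q)) $ a = 0" if "a \<in> D" for a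
    using that by (auto simp: pad_def vec_eq_iff matrix_vector_mult_diff_distrib dest: spec[of _ a])
  with off show ?thesis
    by blast
qed

context
  fixes \<Theta> :: "real^'n^'n"
  assumes pos: "sym_pos_def \<Theta>"
begin

lemma quad_proj_outside: "i \<notin> D \<Longrightarrow> quad_proj \<Theta> D x $ i = 0"
  and quad_proj_orthogonal: "a \<in> D \<Longrightarrow> (\<Theta> *v (x - quad_proj \<Theta> D x)) $ a = 0"
  using someI_ex[OF quad_proj_exists[OF pos, of D x]] unfolding quad_proj_def by blast+

lemma quad_proj_unique:
  assumes "\<And>i. i \<notin> D \<Longrightarrow> p $ i = 0" and "\<And>a. a \<in> D \<Longrightarrow> (\<Theta> *v (x - p)) $ a = 0"
  shows "quad_proj \<Theta> D x = p"
proof -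
  have "p - quad_proj \<Theta> D x = 0"
  proof (rule sym_pos_def_block_kernel_trivial[OF pos])
    show "(p - quad_proj \<Theta> D x) $ i = 0" if "i \<notin> D" for i
      using that assms(1) quad_proj_outside by simp
    have "\<Theta> *v (p - quad_proj \<Theta> D x) = \<Theta> *v (x - quad_proj \<Theta> D x) - \<Theta> *v (x - p)"
      by (simp add: matrix_vector_mult_diff_distrib)
    then show "(\<Theta> *v (p - quad_proj \<Theta> D x)) $ a = 0" if "a \<in> D" for a
      using that assms(2) by (simp add: quad_proj_orthogonal)
  qed
  then show ?thesis
    by simp
qed

lemma linear_quad_proj: "linear (quad_proj \<Theta> D)"
proof (rule linearI)
  fix x y :: "real^'n" and c :: real
  have add: "x + y - (quad_proj \<Theta> D x + quad_proj \<Theta> D y)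
      = (x - quad_proj \<Theta> D x) + (y - quad_proj \<Theta> D y)"
    by simp
  show "quad_proj \<Theta> D (x + y) = quad_proj \<Theta> D x + quad_proj \<Theta> D y"
  proof (rule quad_proj_unique)
    show "(quad_proj \<Theta> D x + quad_proj \<Theta> D y) $ i = 0" if "i \<notin> D" for i
      using that by (simp add: quad_proj_outside)
    show "(\<Theta> *v (x + y - (quad_proj \<Theta> D x + quad_proj \<Theta> D y))) $ a = 0" if "a \<in> D" for a
      using that unfolding add matrix_vector_right_distrib by (simp add: quad_proj_orthogonal)
  qed
  have scale: "c *\<^sub>R x - c *\<^sub>R quad_proj \<Theta> D x = c *\<^sub>R (x - quad_proj \<Theta> D x)"
    by (simp add: scaleR_right_diff_distrib)
  show "quad_proj \<Theta> D (c *\<^sub>R x) = c *\<^sub>R quad_proj \<Theta> D x"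
  proof (rule quad_proj_unique)
    show "(c *\<^sub>R quad_proj \<Theta> D x) $ i = 0" if "i \<notin> D" for i
      using that by (simp add: quad_proj_outside)
    show "(\<Theta> *v (c *\<^sub>R x - c *\<^sub>R quad_proj \<Theta> D x)) $ a = 0" if "a \<in> D" for a
      using that unfolding scale matrix_vector_mult_scaleR by (simp add: quad_proj_orthogonal)
  qed
qed

lemma quad_reflect_outside: "i \<notin> D \<Longrightarrow> quad_reflect \<Theta> D x $ i = x $ i"
  by (simp add: quad_reflect_def quad_proj_outside)

lemma linear_quad_reflect: "linear (quad_reflect \<Theta> D)"
  using linear_quad_proj[of D]
  by (intro linearI) (simp_all add: quad_reflect_def linear_add linear_scale scaleR_add_right scaleR_diff_right)

lemma quad_proj_reflect: "quad_proj \<Theta> D (quad_reflect \<Theta> D x) = - quad_proj \<Theta> D x"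
proof (rule quad_proj_unique)
  have eq: "quad_reflect \<Theta> D x - - quad_proj \<Theta> D x = x - quad_proj \<Theta> D x"
    by (simp add: quad_reflect_def scaleR_2)
  show "(\<Theta> *v (quad_reflect \<Theta> D x - - quad_proj \<Theta> D x)) $ a = 0" if "a \<in> D" for a
    unfolding eq using that by (rule quad_proj_orthogonal)
qed (simp add: quad_proj_outside)

lemma quad_reflect_involution: "quad_reflect \<Theta> D (quad_reflect \<Theta> D x) = x"
  unfolding quad_reflect_def[of _ _ "quad_reflect \<Theta> D x"] quad_proj_reflect
  by (simp add: quad_reflect_def)

lemma quad_reflect_quadratic_form:
  "quad_reflect \<Theta> D x \<bullet> (\<Theta> *v quad_reflect \<Theta> D x) = x \<bullet> (\<Theta> *v x)"
proof -
  define p where "p = quad_proj \<Theta> D x"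
  have symm: "u \<bullet> (\<Theta> *v v) = v \<bullet> (\<Theta> *v u)" for u v
    using pos unfolding sym_pos_def_def by (metis dot_lmul_matrix inner_commute transpose_matrix_vector)
  have "p \<bullet> (\<Theta> *v (x - p)) = (\<Sum>i\<in>UNIV. p $ i * (\<Theta> *v (x - p)) $ i)"
    by (simp add: inner_vec_def)
  also have "\<dots> = 0"
  proof (intro sum.neutral ballI)
    show "p $ i * (\<Theta> *v (x - p)) $ i = 0" for i
      by (cases "i \<in> D") (simp_all add: p_def quad_proj_outside quad_proj_orthogonal)
  qed
  finally have "p \<bullet> (\<Theta> *v (x - p)) = 0" .
  then show ?thesis
    unfolding quad_reflect_def p_def[symmetric]
    by (simp add: matrix_vector_mult_diff_distrib matrix_vector_mult_scaleR inner_diff_left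
        inner_diff_right symm[of x p] algebra_simps)
qed

lemma quad_proj_separated:
  assumes "D \<inter> C = {}" and "\<And>a b. a \<in> D \<Longrightarrow> b \<notin> D \<Longrightarrow> b \<notin> C \<Longrightarrow> \<Theta> $ a $ b = 0"
  shows "quad_proj \<Theta> D x = vec_restrict D x + quad_proj \<Theta> D (vec_restrict C x)"
proof (rule quad_proj_unique)
  let ?r = "vec_restrict (- (D \<union> C)) x"
  have split: "x - (vec_restrict D x + quad_proj \<Theta> D (vec_restrict C x))
      = ?r + (vec_restrict C x - quad_proj \<Theta> D (vec_restrict C x))"
    using assms(1) by (auto simp: vec_eq_iff)
  have "(\<Theta> *v ?r) $ a = 0" if "a \<in> D" for a
    using assms(2)[OF that] by (auto simp: matrix_vector_mult_def intro!: sum.neutral)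
  then show "(\<Theta> *v (x - (vec_restrict D x + quad_proj \<Theta> D (vec_restrict C x)))) $ a = 0"
    if "a \<in> D" for a
    unfolding split matrix_vector_right_distrib using that by (simp add: quad_proj_orthogonal)
qed (simp add: quad_proj_outside)

lemma quad_reflect_add_nth:
  assumes "D \<inter> C = {}" and "\<And>a b. a \<in> D \<Longrightarrow> b \<notin> D \<Longrightarrow> b \<notin> C \<Longrightarrow> \<Theta> $ a $ b = 0"
    and "j \<in> D"
  shows "x $ j + quad_reflect \<Theta> D x $ j = - 2 * quad_proj \<Theta> D (vec_restrict C x) $ j"
  using quad_proj_separated[OF assms(1,2), of x] assms(3) by (simp add: quad_reflect_def)

end

section \<open>Separation in a graph\<close>

lemma is_path_prefix:
  assumes "is_path E ps x y" and "z \<in> set ps"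
  obtains qs where "is_path E qs x z" and "set qs \<subseteq> set ps"
proof -
  obtain i where i: "i < length ps" "ps ! i = z"
    using assms(2) by (auto simp: in_set_conv_nth)
  have "last (take (Suc i) ps) = z"
    using i by (simp add: take_Suc_conv_app_nth)
  then have "is_path E (take (Suc i) ps) x z"
    using assms(1) i by (auto simp: is_path_def hd_take)
  then show ?thesis
    using that set_take_subset by metis
qed

lemma is_path_snoc:
  assumes "is_path E ps x y" and "E y z" and "z \<notin> set ps"
  shows "is_path E (ps @ [z]) x z"
  unfolding is_path_def
proof (intro conjI allI impI)
  fix i assume i: "Suc i < length (ps @ [z])"
  show "E ((ps @ [z]) ! i) ((ps @ [z]) ! Suc i)"
  proof (cases "Suc i < length ps")
    case True
    then show ?thesis
      using assms(1) by (simp add: is_path_def nth_append)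
  next
    case False
    with i have "i = length ps - 1" "Suc i = length ps"
      by auto
    then show ?thesis
      using assms(1,2) by (auto simp: is_path_def nth_append last_conv_nth)
  qed
qed (use assms in \<open>auto simp: is_path_def\<close>)

lemma rtranclp_restrict_imp_path:
  assumes "(\<lambda>a b. E a b \<and> a \<in> V \<and> b \<in> V)\<^sup>*\<^sup>* x y" and "x \<in> V"
  shows "\<exists>ps. is_path E ps x y \<and> set ps \<subseteq> V"
  using assms(1)
proof (induction rule: rtranclp_induct)
  case base
  with assms(2) show ?case
    by (intro exI[of _ "[x]"]) (simp add: is_path_def)
next
  case (step y z)
  then obtain ps where ps: "is_path E ps x y" "set ps \<subseteq> V"
    by blast
  show ?case
  proof (cases "z \<in> set ps")
    case True
    with ps show ?thesis
      by (metis is_path_prefix order_trans)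
  next
    case False
    with ps step.hyps(2) show ?thesis
      by (intro exI[of _ "ps @ [z]"]) (auto intro: is_path_snoc)
  qed
qed

lemma separates_component:
  assumes sep: "separates E C j h" and "j \<notin> C"
  obtains D where "j \<in> D" and "h \<notin> D" and "D \<inter> C = {}"
    and "\<And>a b. a \<in> D \<Longrightarrow> E a b \<Longrightarrow> b \<notin> C \<Longrightarrow> b \<in> D"
proof
  let ?D = "{b. (\<lambda>a b. E a b \<and> a \<in> - C \<and> b \<in> - C)\<^sup>*\<^sup>* j b}"
  show "j \<in> ?D"
    by simp
  show "h \<notin> ?D"
    using rtranclp_restrict_imp_path[of E "- C" j h] sep \<open>j \<notin> C\<close> by (auto simp: separates_def)
  show "?D \<inter> C = {}"
    using \<open>j \<notin> C\<close> by (auto elim: rtranclp.cases)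
  then show "b \<in> ?D" if "a \<in> ?D" "E a b" "b \<notin> C" for a b
    using that by (auto intro: rtranclp.rtrancl_into_rtrancl)
qed

section \<open>Conditional covariance under a reflection\<close>

context sigma_finite_subalgebra
begin

lemma real_cond_exp_symmetrize:
  fixes f f' g :: "'a \<Rightarrow> real"
  assumes f: "integrable M f" and f': "integrable M f'"
    and sym_F: "\<And>A. A \<in> sets F \<Longrightarrow> (\<integral>\<omega>\<in>A. f \<omega> \<partial>M) = (\<integral>\<omega>\<in>A. f' \<omega> \<partial>M)"
    and g: "\<And>\<omega>. \<omega> \<in> space M \<Longrightarrow> f \<omega> + f' \<omega> = 2 * g \<omega>"
  shows "integrable M g" and "AE \<omega> in M. real_cond_exp M F f \<omega> = real_cond_exp M F g \<omega>"
proof -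
  have g_eq: "g \<omega> = (f \<omega> + f' \<omega>) / 2" if "\<omega> \<in> space M" for \<omega>
    using g[OF that] by simp
  have "integrable M g \<longleftrightarrow> integrable M (\<lambda>\<omega>. (f \<omega> + f' \<omega>) / 2)"
    by (rule Bochner_Integration.integrable_cong) (simp_all add: g_eq)
  with f f' show g_int: "integrable M g"
    by simp
  show "AE \<omega> in M. real_cond_exp M F f \<omega> = real_cond_exp M F g \<omega>"
  proof (rule real_cond_exp_charact[OF _ f real_cond_exp_int(1)[OF g_int]])
    fix A assume A: "A \<in> sets F"
    then have "A \<in> sets M"
      using subalg by (auto simp: subalgebra_def)
    then have "set_integrable M A f" "set_integrable M A f'"
      using integrable_mult_indicator[of A M f] integrable_mult_indicator[of A M f'] f f'
      by (simp_all add: set_integrable_def)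
    then have "(\<integral>\<omega>\<in>A. f \<omega> \<partial>M) = (\<integral>\<omega>\<in>A. (f \<omega> + f' \<omega>) / 2 \<partial>M)"
      using sym_F[OF A] by (simp add: set_integral_add set_integral_divide_zero)
    also have "\<dots> = (\<integral>\<omega>\<in>A. g \<omega> \<partial>M)"
      using \<open>A \<in> sets M\<close> sets.sets_into_space[OF \<open>A \<in> sets M\<close>]
      by (intro set_lebesgue_integral_cong) (auto simp: g_eq subset_iff)
    also have "\<dots> = (\<integral>\<omega>\<in>A. real_cond_exp M F g \<omega> \<partial>M)"
      by (rule real_cond_exp_intA[OF g_int A])
    finally show "(\<integral>\<omega>\<in>A. f \<omega> \<partial>M) = (\<integral>\<omega>\<in>A. real_cond_exp M F g \<omega> \<partial>M)" .
  qed simp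
qed

lemma cond_cov_eq_0_of_reflection:
  fixes U U' V m :: "'a \<Rightarrow> real"
  assumes U: "integrable M U" and U': "integrable M U'"
    and UV: "integrable M (\<lambda>\<omega>. U \<omega> * V \<omega>)" and U'V: "integrable M (\<lambda>\<omega>. U' \<omega> * V \<omega>)"
    and V: "V \<in> borel_measurable M" and m: "m \<in> borel_measurable F"
    and sum: "\<And>\<omega>. \<omega> \<in> space M \<Longrightarrow> U \<omega> + U' \<omega> = 2 * m \<omega>"
    and sym_F: "\<And>A. A \<in> sets F \<Longrightarrow> (\<integral>\<omega>\<in>A. U \<omega> \<partial>M) = (\<integral>\<omega>\<in>A. U' \<omega> \<partial>M)"
    and sym_V: "\<And>A. A \<in> sets F \<Longrightarrow> (\<integral>\<omega>\<in>A. U \<omega> * V \<omega> \<partial>M) = (\<integral>\<omega>\<in>A. U' \<omega> * V \<omega> \<partial>M)"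
  shows "AE \<omega> in M. cond_cov M F U V \<omega> = 0"
proof -
  have sum_V: "U \<omega> * V \<omega> + U' \<omega> * V \<omega> = 2 * (m \<omega> * V \<omega>)" if "\<omega> \<in> space M" for \<omega>
    using sum[OF that] by (metis distrib_right mult.assoc)
  have U_sym: "integrable M m" "AE \<omega> in M. real_cond_exp M F U \<omega> = real_cond_exp M F m \<omega>"
    using real_cond_exp_symmetrize[OF U U', of m] by (simp_all add: sym_F sum)
  have UV_sym: "integrable M (\<lambda>\<omega>. m \<omega> * V \<omega>)"
    "AE \<omega> in M. real_cond_exp M F (\<lambda>\<omega>. U \<omega> * V \<omega>) \<omega> = real_cond_exp M F (\<lambda>\<omega>. m \<omega> * V \<omega>) \<omega>"
    using real_cond_exp_symmetrize[OF UV U'V, of "\<lambda>\<omega>. m \<omega> * V \<omega>"] by (simp_all add: sym_V sum_V)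
  from U_sym(2) UV_sym(2) real_cond_exp_F_meas[OF U_sym(1) m] real_cond_exp_mult[OF m V UV_sym(1)]
  show ?thesis
    by eventually_elim (simp add: cond_cov_def)
qed

end

section \<open>The sigma-algebra generated by some coordinates\<close>

lemma borel_measurable_vec:
  fixes f :: "'a \<Rightarrow> real^'n"
  assumes "\<And>i. (\<lambda>\<omega>. f \<omega> $ i) \<in> borel_measurable M"
  shows "f \<in> borel_measurable M"
  using assms by (subst borel_measurable_euclidean_space) (auto simp: Basis_vec_def inner_axis)

lemma set_integral_eq_of_distr_eq:
  fixes \<phi> :: "'b \<Rightarrow> real"
  assumes X[measurable]: "X \<in> measurable M N" and T[measurable]: "T \<in> measurable N N"
    and law: "distr M N (\<lambda>\<omega>. T (X \<omega>)) = distr M N X"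
    and B[measurable]: "B \<in> sets N" and inv: "\<And>y. y \<in> space N \<Longrightarrow> T y \<in> B \<longleftrightarrow> y \<in> B"
    and \<phi>[measurable]: "\<phi> \<in> borel_measurable N"
  shows "(\<integral>\<omega>\<in>X -` B \<inter> space M. \<phi> (X \<omega>) \<partial>M) = (\<integral>\<omega>\<in>X -` B \<inter> space M. \<phi> (T (X \<omega>)) \<partial>M)"
proof -
  have "(\<integral>\<omega>\<in>X -` B \<inter> space M. \<phi> (X \<omega>) \<partial>M) = (\<integral>\<omega>. indicator B (X \<omega>) * \<phi> (X \<omega>) \<partial>M)"
    unfolding set_lebesgue_integral_def
    by (intro Bochner_Integration.integral_cong) (auto split: split_indicator)
  also have "\<dots> = (\<integral>y. indicator B y * \<phi> y \<partial>distr M N X)"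
    by (simp add: integral_distr)
  also have "\<dots> = (\<integral>\<omega>. indicator B (T (X \<omega>)) * \<phi> (T (X \<omega>)) \<partial>M)"
    unfolding law[symmetric] by (simp add: integral_distr)
  also have "\<dots> = (\<integral>\<omega>\<in>X -` B \<inter> space M. \<phi> (T (X \<omega>)) \<partial>M)"
    unfolding set_lebesgue_integral_def using measurable_space[OF X] inv
    by (intro Bochner_Integration.integral_cong) (auto split: split_indicator)
  finally show ?thesis .
qed

lemma integrable_eq_of_distr_eq:
  fixes \<phi> :: "'b \<Rightarrow> real"
  assumes X[measurable]: "X \<in> measurable M N" and T[measurable]: "T \<in> measurable N N"
    and law: "distr M N (\<lambda>\<omega>. T (X \<omega>)) = distr M N X"
    and \<phi>[measurable]: "\<phi> \<in> borel_measurable N"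
  shows "integrable M (\<lambda>\<omega>. \<phi> (T (X \<omega>))) \<longleftrightarrow> integrable M (\<lambda>\<omega>. \<phi> (X \<omega>))"
  using integrable_distr_eq[of "\<lambda>\<omega>. T (X \<omega>)" M N \<phi>] integrable_distr_eq[of X M N \<phi>]
  by (simp add: law)

lemma space_coord_sigma [simp]: "space (coord_sigma M X C) = space M"
  by (simp add: coord_sigma_def space_measure_of_conv)

lemma sets_coord_sigma:
  "sets (coord_sigma M X C)
     = sigma_sets (space M) (\<Union>i\<in>C. {(\<lambda>\<omega>. X \<omega> $ i) -` B \<inter> space M | B. B \<in> sets borel})"
  unfolding coord_sigma_def by (rule sets_measure_of) auto

lemma subalgebra_coord_sigma:
  assumes "X \<in> borel_measurable M"
  shows "subalgebra M (coord_sigma M X C)"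
  unfolding subalgebra_def sets_coord_sigma
  using assms by (auto intro!: sets.sigma_sets_subset measurable_sets measurable_compose[OF _ borel_measurable_nth])

lemma measurable_coord_sigma_nth:
  assumes "i \<in> C"
  shows "(\<lambda>\<omega>. X \<omega> $ i) \<in> borel_measurable (coord_sigma M X C)"
  using assms by (intro measurableI) (auto simp: sets_coord_sigma)

lemma sets_coord_sigma_preimage:
  assumes "A \<in> sets (coord_sigma M X C)"
  obtains B where "B \<in> sets borel" and "A = (\<lambda>\<omega>. vec_restrict C (X \<omega>)) -` B \<inter> space M"
proof -
  let ?V = "vimage_algebra (space M) (\<lambda>\<omega>. vec_restrict C (X \<omega>)) borel"
  have "(\<lambda>\<omega>. X \<omega> $ i) -` B \<inter> space M \<in> sets ?V" if "i \<in> C" "B \<in> sets borel" for i B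
  proof -
    have "(\<lambda>y. y $ i) -` B \<in> sets borel"
      using that(2) by (rule measurable_sets_borel[OF borel_measurable_nth])
    then have "(\<lambda>\<omega>. vec_restrict C (X \<omega>)) -` ((\<lambda>y. y $ i) -` B) \<inter> space M \<in> sets ?V"
      by (rule in_vimage_algebra)
    moreover have "(\<lambda>\<omega>. vec_restrict C (X \<omega>)) -` ((\<lambda>y. y $ i) -` B) = (\<lambda>\<omega>. X \<omega> $ i) -` B"
      using that(1) by auto
    ultimately show ?thesis
      by simp
  qed
  then have "sigma_sets (space ?V) (\<Union>i\<in>C. {(\<lambda>\<omega>. X \<omega> $ i) -` B \<inter> space M | B. B \<in> sets borel})
      \<subseteq> sets ?V"
    by (intro sets.sigma_sets_subset) auto
  then have "sets (coord_sigma M X C) \<subseteq> sets ?V"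
    by (simp add: sets_coord_sigma)
  with assms show ?thesis
    using that by (auto simp: sets_vimage_algebra2)
qed

lemma measurable_coord_sigma_restrict:
  "(\<lambda>\<omega>. vec_restrict C (X \<omega>)) \<in> borel_measurable (coord_sigma M X C)"
proof (intro borel_measurable_vec)
  show "(\<lambda>\<omega>. vec_restrict C (X \<omega>) $ i) \<in> borel_measurable (coord_sigma M X C)" for i
    by (cases "i \<in> C") (simp_all add: measurable_coord_sigma_nth)
qed

lemma borel_measurable_vec_restrict: "(vec_restrict C :: real^'n \<Rightarrow> real^'n) \<in> borel_measurable borel"
  by (intro borel_measurable_vec) simp

lemma coord_sigma_set_integral_reflect:
  fixes X :: "'a \<Rightarrow> real^'n" and T :: "real^'n \<Rightarrow> real^'n" and \<phi> :: "real^'n \<Rightarrow> real"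
  assumes X: "X \<in> borel_measurable M" and T: "T \<in> borel_measurable borel"
    and law: "distr M lborel (\<lambda>\<omega>. T (X \<omega>)) = distr M lborel X"
    and fix_C: "\<And>y. vec_restrict C (T y) = vec_restrict C y"
    and A: "A \<in> sets (coord_sigma M X C)" and \<phi>: "\<phi> \<in> borel_measurable borel"
  shows "(\<integral>\<omega>\<in>A. \<phi> (X \<omega>) \<partial>M) = (\<integral>\<omega>\<in>A. \<phi> (T (X \<omega>)) \<partial>M)"
proof -
  obtain B where B: "B \<in> sets borel" and A_eq: "A = (\<lambda>\<omega>. vec_restrict C (X \<omega>)) -` B \<inter> space M"
    using sets_coord_sigma_preimage[OF A] by blast
  have "vec_restrict C -` B \<in> sets borel"
    using B by (rule measurable_sets_borel[OF borel_measurable_vec_restrict])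
  moreover have "A = X -` (vec_restrict C -` B) \<inter> space M"
    by (simp add: A_eq vimage_def)
  ultimately show ?thesis
    using set_integral_eq_of_distr_eq[of X M lborel T "vec_restrict C -` B" \<phi>] X T law \<phi> fix_C
    by simp
qed

section \<open>Elliptical distributions\<close>

lemma lborel_distr_linear_involution:
  fixes L :: "real^'n \<Rightarrow> real^'n"
  assumes L: "linear L" and inv: "\<And>x. L (L x) = x"
  shows "distr lborel borel L = lborel"
  using lborel_eq_density_distr_linear[OF L] abs_det_matrix_involution[OF L inv]
  by (simp add: density_1)

lemma lborel_distr_reflection:
  fixes L :: "real^'n \<Rightarrow> real^'n"
  assumes L: "linear L" and inv: "\<And>x. L (L x) = x"
  shows "distr lborel borel (\<lambda>y. \<mu> + L (y - \<mu>)) = lborel"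
proof -
  note [measurable] = borel_measurable_linear[OF L]
  have "(\<lambda>y. \<mu> + L (y - \<mu>)) = (+) (\<mu> - L \<mu>) \<circ> L"
    using linear_diff[OF L] by (auto simp: fun_eq_iff)
  then have "distr lborel borel (\<lambda>y. \<mu> + L (y - \<mu>)) = distr (distr lborel borel L) borel ((+) (\<mu> - L \<mu>))"
    by (simp add: distr_distr)
  then show ?thesis
    by (simp add: lborel_distr_linear_involution[OF L inv] lborel_distr_plus)
qed

lemma distr_eq_of_density_invariant:
  assumes X: "distributed M lborel X f" and T[measurable]: "T \<in> borel_measurable borel"
    and T_lborel: "distr lborel borel T = lborel" and f_T: "\<And>y. f (T y) = f y"
  shows "distr M lborel (\<lambda>\<omega>. T (X \<omega>)) = distr M lborel X"
proof -
  note [measurable] = distributed_borel_measurable[OF X]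
  have [measurable]: "X \<in> borel_measurable M"
    using distributed_measurable[OF X] by simp
  have "distr M lborel (\<lambda>\<omega>. T (X \<omega>)) = distr (distr M lborel X) lborel T"
    by (subst distr_distr) (simp_all add: comp_def)
  also have "\<dots> = distr (density lborel f) lborel T"
    by (simp add: distributed_distr_eq_density[OF X])
  also have "\<dots> = distr (density lborel (\<lambda>y. f (T y))) borel T"
    by (rule distr_cong) (simp_all add: f_T)
  also have "\<dots> = density lborel f"
    by (simp add: density_distr[symmetric] T_lborel)
  finally show ?thesis
    by (simp add: distributed_distr_eq_density[OF X])
qed

lemma elliptical_distr_reflect:
  fixes X :: "'a \<Rightarrow> real^'n" and \<Theta> :: "real^'n^'n"
  assumes law: "distributed M lborel X (\<lambda>y. ennreal (g ((y - \<mu>) \<bullet> (\<Theta> *v (y - \<mu>)))))"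
    and \<Theta>: "sym_pos_def \<Theta>"
  shows "distr M lborel (\<lambda>\<omega>. \<mu> + quad_reflect \<Theta> D (X \<omega> - \<mu>)) = distr M lborel X"
proof (rule distr_eq_of_density_invariant[OF law])
  note lin = linear_quad_reflect[OF \<Theta>] and inv = quad_reflect_involution[OF \<Theta>]
  show "(\<lambda>y. \<mu> + quad_reflect \<Theta> D (y - \<mu>)) \<in> borel_measurable borel"
    using borel_measurable_linear[OF lin] by measurable
  show "distr lborel borel (\<lambda>y. \<mu> + quad_reflect \<Theta> D (y - \<mu>)) = lborel"
    by (rule lborel_distr_reflection[OF lin inv])
qed (simp add: quad_reflect_quadratic_form[OF \<Theta>])

lemma precision_separation_component:
  fixes \<Theta> :: "real^'n^'n"
  assumes "separates (precision_edge \<Theta>) C j h" and "j \<notin> C"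
  obtains D where "j \<in> D" and "h \<notin> D" and "D \<inter> C = {}"
    and "\<And>a b. a \<in> D \<Longrightarrow> b \<notin> D \<Longrightarrow> b \<notin> C \<Longrightarrow> \<Theta> $ a $ b = 0"
proof -
  obtain D where "j \<in> D" "h \<notin> D" "D \<inter> C = {}"
    and closed: "\<And>a b. a \<in> D \<Longrightarrow> precision_edge \<Theta> a b \<Longrightarrow> b \<notin> C \<Longrightarrow> b \<in> D"
    using separates_component[OF assms] by blast
  moreover have "\<Theta> $ a $ b = 0" if "a \<in> D" "b \<notin> D" "b \<notin> C" for a b
    using closed[OF that(1) _ that(3)] that(1,2) by (auto simp: precision_edge_def)
  ultimately show ?thesis
    using that by blast
qed

lemma cond_cov_eq_0_of_coord_reflection:
  fixes X :: "'a \<Rightarrow> real^'n" and T :: "real^'n \<Rightarrow> real^'n" and \<phi> :: "real^'n \<Rightarrow> real"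
  assumes "prob_space M" and X: "X \<in> borel_measurable M" and T: "T \<in> borel_measurable borel"
    and law: "distr M lborel (\<lambda>\<omega>. T (X \<omega>)) = distr M lborel X"
    and moment1: "\<And>i. integrable M (\<lambda>\<omega>. X \<omega> $ i)"
    and moment2: "\<And>i i'. integrable M (\<lambda>\<omega>. X \<omega> $ i * X \<omega> $ i')"
    and T_C: "\<And>y. vec_restrict C (T y) = vec_restrict C y" and T_h: "\<And>y. T y $ h = y $ h"
    and \<phi>: "\<phi> \<in> borel_measurable borel" and T_j: "\<And>y. y $ j + T y $ j = 2 * \<phi> (vec_restrict C y)"
  shows "AE \<omega> in M. cond_cov M (coord_sigma M X C) (\<lambda>\<omega>. X \<omega> $ j) (\<lambda>\<omega>. X \<omega> $ h) \<omega> = 0"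
proof -
  interpret prob_space M by fact
  interpret F: sigma_finite_subalgebra M "coord_sigma M X C"
    by (intro finite_measure_subalgebra_is_sigma_finite)
      (simp add: finite_measure_subalgebra_def finite_measure_subalgebra_axioms_def
        finite_measure_axioms subalgebra_coord_sigma[OF X])
  have T_jh: "T y $ j * T y $ h = T y $ j * y $ h" for y
    by (simp add: T_h)
  show ?thesis
  proof (rule F.cond_cov_eq_0_of_reflection[where U' = "\<lambda>\<omega>. T (X \<omega>) $ j"])
    show "integrable M (\<lambda>\<omega>. T (X \<omega>) $ j)"
      using integrable_eq_of_distr_eq[OF _ _ law, of "\<lambda>y. y $ j"] X T moment1 by simp
    show "integrable M (\<lambda>\<omega>. T (X \<omega>) $ j * X \<omega> $ h)"
      using integrable_eq_of_distr_eq[OF _ _ law, of "\<lambda>y. y $ j * y $ h"] X T moment2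
      by (simp add: T_jh)
    show "(\<integral>\<omega>\<in>A. X \<omega> $ j \<partial>M) = (\<integral>\<omega>\<in>A. T (X \<omega>) $ j \<partial>M)"
      if "A \<in> sets (coord_sigma M X C)" for A
      using coord_sigma_set_integral_reflect[OF X T law T_C that, of "\<lambda>y. y $ j"] by simp
    show "(\<integral>\<omega>\<in>A. X \<omega> $ j * X \<omega> $ h \<partial>M) = (\<integral>\<omega>\<in>A. T (X \<omega>) $ j * X \<omega> $ h \<partial>M)"
      if "A \<in> sets (coord_sigma M X C)" for A
      using coord_sigma_set_integral_reflect[OF X T law T_C that, of "\<lambda>y. y $ j * y $ h"]
      by (simp add: T_jh)
    show "(\<lambda>\<omega>. \<phi> (vec_restrict C (X \<omega>))) \<in> borel_measurable (coord_sigma M X C)"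
      using measurable_coord_sigma_restrict \<phi> by (rule measurable_compose)
  qed (use X moment1 moment2 T_j in simp_all)
qed

theorem elliptical_cond_cov_eq_0:
  fixes X :: "'a \<Rightarrow> real^'n" and \<Theta> :: "real^'n^'n" and g :: "real \<Rightarrow> real"
  assumes "prob_space M"
    and law: "distributed M lborel X (\<lambda>y. ennreal (g ((y - \<mu>) \<bullet> (\<Theta> *v (y - \<mu>)))))"
    and \<Theta>: "sym_pos_def \<Theta>"
    and "\<And>i. integrable M (\<lambda>\<omega>. X \<omega> $ i)"
    and "\<And>i i'. integrable M (\<lambda>\<omega>. X \<omega> $ i * X \<omega> $ i')"
    and sep: "separates (precision_edge \<Theta>) C j h" and "j \<notin> C"
  shows "AE \<omega> in M. cond_cov M (coord_sigma M X C) (\<lambda>\<omega>. X \<omega> $ j) (\<lambda>\<omega>. X \<omega> $ h) \<omega> = 0"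
proof -
  obtain D where D: "j \<in> D" "h \<notin> D" "D \<inter> C = {}"
    and zero: "\<And>a b. a \<in> D \<Longrightarrow> b \<notin> D \<Longrightarrow> b \<notin> C \<Longrightarrow> \<Theta> $ a $ b = 0"
    using precision_separation_component[OF sep \<open>j \<notin> C\<close>] by blast
  define T where "T y = \<mu> + quad_reflect \<Theta> D (y - \<mu>)" for y
  define \<phi> where "\<phi> z = \<mu> $ j - quad_proj \<Theta> D (z - vec_restrict C \<mu>) $ j" for z
  note [measurable] = borel_measurable_linear[OF linear_quad_reflect[OF \<Theta>]]
  have T_outside: "T y $ i = y $ i" if "i \<notin> D" for y i
    using that by (simp add: T_def quad_reflect_outside[OF \<Theta>])
  show ?thesis
  proof (rule cond_cov_eq_0_of_coord_reflection[where T = T and \<phi> = \<phi>])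
    show "T \<in> borel_measurable borel"
      unfolding T_def[abs_def] by measurable
    have "(\<lambda>z. quad_proj \<Theta> D (z - vec_restrict C \<mu>)) \<in> borel_measurable borel"
      by (rule measurable_compose[OF _ borel_measurable_linear[OF linear_quad_proj[OF \<Theta>]]]) simp
    then show "\<phi> \<in> borel_measurable borel"
      unfolding \<phi>_def[abs_def]
      by (intro borel_measurable_diff borel_measurable_const measurable_compose[OF _ borel_measurable_nth])
    show "distr M lborel (\<lambda>\<omega>. T (X \<omega>)) = distr M lborel X"
      unfolding T_def by (rule elliptical_distr_reflect[OF law \<Theta>])
    show "vec_restrict C (T y) = vec_restrict C y" for y
      using T_outside D(3) by (auto simp: vec_eq_iff)
    show "y $ j + T y $ j = 2 * \<phi> (vec_restrict C y)" for y
      using quad_reflect_add_nth[OF \<Theta> D(3) zero D(1), of "y - \<mu>"]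
      by (simp add: T_def \<phi>_def linear_diff[OF linear_vec_restrict])
  qed (use assms distributed_measurable[OF law] T_outside[OF D(2)] in simp_all)
qed

section \<open>The generalized hyperbolic density\<close>

lemma invertible_matrix_inv:
  fixes A :: "'a::field^'n^'n"
  assumes "invertible A"
  shows "A ** matrix_inv A = mat 1" and "matrix_inv A ** A = mat 1"
  using someI_ex[OF assms[unfolded invertible_def]] by (simp_all add: matrix_inv_def)

lemma sym_pos_def_matrix_inv:
  fixes \<Sigma> :: "real^'n^'n"
  assumes "sym_pos_def \<Sigma>"
  shows "sym_pos_def (matrix_inv \<Sigma>)"
proof -
  let ?\<Theta> = "matrix_inv \<Sigma>"
  have sym: "transpose \<Sigma> = \<Sigma>" and pos: "\<And>x. x \<noteq> 0 \<Longrightarrow> 0 < x \<bullet> (\<Sigma> *v x)"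
    using assms by (auto simp: sym_pos_def_def)
  have "invertible \<Sigma>"
    unfolding invertible_left_inverse matrix_left_invertible_ker
    using pos by (metis inner_zero_right less_irrefl)
  note inv = invertible_matrix_inv[OF this]
  have "transpose ?\<Theta> = transpose ?\<Theta> ** (\<Sigma> ** ?\<Theta>)"
    by (simp add: inv)
  also have "\<dots> = transpose (\<Sigma> ** ?\<Theta>) ** ?\<Theta>"
    by (simp add: matrix_mul_assoc matrix_transpose_mul sym)
  finally have "transpose ?\<Theta> = ?\<Theta>"
    by (simp add: inv)
  moreover have "0 < x \<bullet> (?\<Theta> *v x)" if "x \<noteq> 0" for x
  proof -
    have "x = \<Sigma> *v (?\<Theta> *v x)"
      by (simp add: matrix_vector_mul_assoc inv)
    with that have "?\<Theta> *v x \<noteq> 0"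
      by auto
    with pos have "0 < (?\<Theta> *v x) \<bullet> (\<Sigma> *v (?\<Theta> *v x))"
      by blast
    then show ?thesis
      using \<open>x = \<Sigma> *v (?\<Theta> *v x)\<close> by (simp add: inner_commute)
  qed
  ultimately show ?thesis
    by (simp add: sym_pos_def_def)
qed

lemma sym_pos_def_coercive:
  fixes \<Theta> :: "real^'n^'n"
  assumes "sym_pos_def \<Theta>"
  obtains c where "0 < c" and "\<And>x. c * (norm x)\<^sup>2 \<le> x \<bullet> (\<Theta> *v x)"
proof -
  let ?q = "\<lambda>x::real^'n. x \<bullet> (\<Theta> *v x)"
  have "continuous_on (sphere 0 1) ?q"
    by (intro continuous_intros linear_continuous_on) (simp add: linear_conv_bounded_linear)
  moreover have "sphere (0::real^'n) 1 \<noteq> {}"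
    using vector_choose_size[of 1] by (auto simp: sphere_def)
  ultimately obtain x0 where x0: "x0 \<in> sphere 0 1" and min: "\<And>y. y \<in> sphere 0 1 \<Longrightarrow> ?q x0 \<le> ?q y"
    using continuous_attains_inf[OF compact_sphere] by blast
  have "x0 \<noteq> 0"
    using x0 by auto
  with assms have "0 < ?q x0"
    by (simp add: sym_pos_def_def)
  moreover have "?q x0 * (norm x)\<^sup>2 \<le> ?q x" for x
  proof (cases "x = 0")
    case False
    define u where "u = x /\<^sub>R norm x"
    have "?q x = (norm x)\<^sup>2 * ?q u"
      using False by (simp add: u_def matrix_vector_mult_scaleR power2_eq_square field_simps)
    moreover have "?q x0 \<le> ?q u"
      using False by (intro min) (simp add: u_def)
    ultimately show ?thesis
      by (simp add: mult.commute mult_right_mono)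
  qed simp
  ultimately show ?thesis
    using that by blast
qed

lemma cosh_ge_square_div_8:
  fixes u :: real
  assumes "0 \<le> u"
  shows "u\<^sup>2 / 8 \<le> cosh u"
proof -
  have "(u / 2)\<^sup>2 \<le> (1 + u / 2)\<^sup>2"
    using assms by (intro power_mono) auto
  also have "\<dots> \<le> (exp (u / 2))\<^sup>2"
    using assms exp_ge_add_one_self[of "u / 2"] by (intro power_mono) auto
  also have "\<dots> = exp u"
    by (simp add: power2_eq_square flip: exp_add)
  also have "\<dots> \<le> 2 * cosh u"
    by (simp add: cosh_def)
  finally show ?thesis
    by (simp add: power_divide)
qed

lemma cosh_le_exp_abs:
  fixes z :: real
  shows "cosh z \<le> exp \<bar>z\<bar>"
  by (simp add: cosh_def abs_if)

lemma besselK_integrand_bound: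
  fixes x \<nu> u :: real
  assumes x: "0 < x" and u: "0 \<le> u"
  shows "exp (- x * cosh u) * cosh (\<nu> * u) \<le> exp (2 * (\<bar>\<nu>\<bar> + 1)\<^sup>2 / x) * exp (- u)"
proof -
  define b where "b = \<bar>\<nu>\<bar> + 1"
  have "exp (- x * cosh u) * cosh (\<nu> * u) \<le> exp (- x * cosh u) * exp (\<bar>\<nu>\<bar> * u)"
    using cosh_le_exp_abs[of "\<nu> * u"] u by (simp add: abs_mult)
  also have "\<dots> = exp (- x * cosh u + \<bar>\<nu>\<bar> * u)"
    by (rule exp_add[symmetric])
  also have "\<dots> \<le> exp (2 * b\<^sup>2 / x - u)"
  proof -
    have "x * u\<^sup>2 / 8 \<le> x * cosh u"
      using cosh_ge_square_div_8[OF u] x by (simp add: mult_left_mono)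
    moreover have "0 \<le> (x * u - 4 * b)\<^sup>2 / (8 * x)"
      using x by simp
    moreover have "(x * u - 4 * b)\<^sup>2 / (8 * x) = x * u\<^sup>2 / 8 - b * u + 2 * b\<^sup>2 / x"
      using x by (simp add: field_simps power2_eq_square)
    ultimately show ?thesis
      by (simp add: b_def algebra_simps)
  qed
  finally show ?thesis
    by (simp add: b_def exp_diff exp_minus field_simps)
qed

lemma integrable_exponential_density: "0 < l \<Longrightarrow> integrable lborel (exponential_density l)"
  using nn_integral_erlang_ith_moment[of l 0 0]
  by (intro integrableI_nonneg) (simp_all add: exponential_density_nonneg)

lemma set_integrable_exp_neg: "set_integrable lborel {0..} (\<lambda>u::real. exp (- u))"
proof -
  have "(\<lambda>u. indicator {0..} u *\<^sub>R exp (- u)) = exponential_density 1"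
    by (auto simp: fun_eq_iff exponential_density_def)
  then show ?thesis
    using integrable_exponential_density[of 1] by (simp add: set_integrable_def)
qed

lemma integrable_exp_neg_abs:
  assumes "0 < a"
  shows "integrable lborel (\<lambda>t::real. exp (- a * \<bar>t\<bar>))"
proof (rule Bochner_Integration.integrable_bound)
  let ?e = "exponential_density a"
  have "integrable lborel (\<lambda>t. ?e (0 + (- 1) * t))"
    using lborel_integrable_real_affine_iff[of "- 1" ?e 0] integrable_exponential_density[OF assms]
    by simp
  then show "integrable lborel (\<lambda>t. (?e t + ?e (- t)) / a)"
    using integrable_exponential_density[OF assms] by simp
  show "AE t in lborel. norm (exp (- a * \<bar>t\<bar>)) \<le> norm ((?e t + ?e (- t)) / a)"
    using assms by (intro AE_I2) (auto simp: exponential_density_def abs_if)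
qed simp

lemma integrable_exp_neg_norm:
  assumes "0 < b"
  shows "integrable lborel (\<lambda>y::'a::euclidean_space. exp (- b * norm y))"
proof (rule integrableI_nonneg)
  define a where "a = b / DIM('a)"
  have a: "0 < a"
    using assms by (simp add: a_def)
  have bound: "ennreal (exp (- b * norm y)) \<le> (\<Prod>i\<in>Basis. ennreal (exp (- a * \<bar>y \<bullet> i\<bar>)))" for y :: 'a
  proof -
    have "(\<Sum>i\<in>Basis. a * \<bar>y \<bullet> i\<bar>) \<le> (\<Sum>i\<in>(Basis::'a set). a * norm y)"
      using a by (intro sum_mono mult_left_mono Basis_le_norm) auto
    also have "\<dots> = b * norm y"
      by (simp add: a_def)
    finally have "exp (- b * norm y) \<le> (\<Prod>i\<in>Basis. exp (- a * \<bar>y \<bullet> i\<bar>))"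
      by (simp add: exp_sum[symmetric] sum_negf)
    then show ?thesis
      by (simp add: prod_ennreal ennreal_leI)
  qed
  have "(\<integral>\<^sup>+y. ennreal (exp (- b * norm (y::'a))) \<partial>lborel)
      \<le> (\<integral>\<^sup>+y. (\<Prod>i\<in>Basis. ennreal (exp (- a * \<bar>(y::'a) \<bullet> i\<bar>))) \<partial>lborel)"
    by (rule nn_integral_mono) (rule bound)
  also have "\<dots> = (\<Prod>i\<in>(Basis::'a set). \<integral>\<^sup>+t. ennreal (exp (- a * \<bar>t\<bar>)) \<partial>lborel)"
    by (rule nn_integral_lborel_prod) auto
  also have "\<dots> < \<infinity>"
    using integrableD(2)[OF integrable_exp_neg_abs[OF a]] by (simp add: power_less_top_ennreal top.not_eq_extremum)
  finally show "(\<integral>\<^sup>+y. ennreal (exp (- b * norm (y::'a))) \<partial>lborel) < \<infinity>" .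
qed auto

lemma besselK_integrable:
  fixes x \<nu> :: real
  assumes "0 < x"
  shows "set_integrable lborel {0..} (\<lambda>u. exp (- x * cosh u) * cosh (\<nu> * u))"
proof (rule set_integrable_bound[OF set_integrable_mult_right[OF set_integrable_exp_neg]])
  have "(\<lambda>u. exp (- x * cosh u) * cosh (\<nu> * u)) \<in> borel_measurable borel"
    by (intro borel_measurable_continuous_onI continuous_intros)
  then show "set_borel_measurable lborel {0..} (\<lambda>u. exp (- x * cosh u) * cosh (\<nu> * u))"
    unfolding set_borel_measurable_def by (intro borel_measurable_scaleR) simp_all
  show "AE u in lborel. u \<in> {0..} \<longrightarrow> norm (exp (- x * cosh u) * cosh (\<nu> * u))
      \<le> norm (exp (2 * (\<bar>\<nu>\<bar> + 1)\<^sup>2 / x) * exp (- u))"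
    using besselK_integrand_bound[OF assms] by (intro AE_I2) auto
qed

lemma besselK_nonneg: "0 \<le> besselK \<nu> x"
  unfolding besselK_def set_lebesgue_integral_def
  by (intro Bochner_Integration.integral_nonneg) (simp add: indicator_def)

lemma besselK_decay:
  fixes s s0 :: real
  assumes "0 < s0" and "s0 \<le> s"
  shows "besselK \<nu> s \<le> exp (- (s - s0)) * besselK \<nu> s0"
  unfolding besselK_def
proof (subst set_integral_mult_right[symmetric], rule set_integral_mono)
  show "set_integrable lborel {0..} (\<lambda>u. exp (- s * cosh u) * cosh (\<nu> * u))"
    using assms by (intro besselK_integrable) simp
  show "set_integrable lborel {0..} (\<lambda>u. exp (- (s - s0)) * (exp (- s0 * cosh u) * cosh (\<nu> * u)))"
    using assms by (intro set_integrable_mult_right besselK_integrable)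
  fix u :: real
  have "(s - s0) * 1 \<le> (s - s0) * cosh u"
    using assms cosh_real_ge_1[of u] by (intro mult_left_mono) auto
  then have "exp (- s * cosh u) \<le> exp (- (s - s0)) * exp (- s0 * cosh u)"
    by (simp add: algebra_simps flip: exp_add)
  then show "exp (- s * cosh u) * cosh (\<nu> * u) \<le> exp (- (s - s0)) * (exp (- s0 * cosh u) * cosh (\<nu> * u))"
    by (simp add: mult_right_mono)
qed

definition GH_radial :: "real \<Rightarrow> real \<Rightarrow> real \<Rightarrow> real \<Rightarrow> real \<Rightarrow> real \<Rightarrow> real" where
  "GH_radial d det_sigma lam chi psi \<delta> =
     1 / ((2 * pi) powr (d / 2) * sqrt det_sigma * besselK lam (sqrt (psi * chi)))
     * ((chi + \<delta>) / psi) powr ((lam - d / 2) / 2)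
     * besselK (lam - d / 2) (sqrt ((chi + \<delta>) * psi))"

lemma GH_density_radial:
  fixes \<mu> :: "real^'d"
  shows "GH_density \<mu> \<Sigma> lam chi psi y
    = GH_radial (real CARD('d)) (det \<Sigma>) lam chi psi ((y - \<mu>) \<bullet> (matrix_inv \<Sigma> *v (y - \<mu>)))"
  by (simp add: GH_density_def GH_radial_def Let_def)

lemma GH_radial_nonneg: "0 \<le> det_sigma \<Longrightarrow> 0 \<le> GH_radial d det_sigma lam chi psi \<delta>"
  by (simp add: GH_radial_def besselK_nonneg)

lemma bounded_on_ray:
  fixes G :: "real \<Rightarrow> real"
  assumes lim: "(G \<longlongrightarrow> 0) at_top" and cont: "continuous_on {a..} G"
  obtains B where "\<And>t. a \<le> t \<Longrightarrow> \<bar>G t\<bar> \<le> B"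
proof -
  obtain t1 where t1: "\<And>t. t1 \<le> t \<Longrightarrow> \<bar>G t\<bar> < 1"
    using tendstoD[OF lim, of 1] by (auto simp: eventually_at_top_linorder)
  have "bounded (G ` {a..max a t1})"
    using cont by (intro compact_imp_bounded compact_continuous_image) (auto elim: continuous_on_subset)
  then obtain B where B: "\<forall>x\<in>G ` {a..max a t1}. norm x \<le> B"
    unfolding bounded_iff by blast
  show ?thesis
  proof (rule that[of "max 1 B"])
    show "\<bar>G t\<bar> \<le> max 1 B" if "a \<le> t" for t
      using t1[of t] B that by (cases "t1 \<le> t") (auto simp: le_max_iff_disj)
  qed
qed

lemma besselK_weighted_tail:
  fixes psi q \<nu> s0 :: real
  assumes s0: "0 < s0" and psi: "0 < psi"
  obtains B where "0 \<le> B"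
    and "\<And>t. s0 \<le> t \<Longrightarrow> (1 + t\<^sup>2 / psi) * (t\<^sup>2 / psi\<^sup>2) powr q * besselK \<nu> t \<le> B * exp (- t / 2)"
proof -
  define G where "G t = (1 + t\<^sup>2 / psi) * (t\<^sup>2 / psi\<^sup>2) powr q * exp (- t / 2)" for t
  have "(G \<longlongrightarrow> 0) at_top"
    unfolding G_def using psi by real_asymp
  moreover have "continuous_on {s0..} G"
    unfolding G_def using s0 psi by (intro continuous_intros) auto
  ultimately obtain B where B: "\<And>t. s0 \<le> t \<Longrightarrow> \<bar>G t\<bar> \<le> B"
    using bounded_on_ray by blast
  have "0 \<le> B"
    using B[of s0] by simp
  show ?thesis
  proof (rule that[of "besselK \<nu> s0 * exp s0 * B"])
    show "0 \<le> besselK \<nu> s0 * exp s0 * B"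
      using \<open>0 \<le> B\<close> by (simp add: besselK_nonneg)
    fix t assume "s0 \<le> t"
    have "(1 + t\<^sup>2 / psi) * (t\<^sup>2 / psi\<^sup>2) powr q * besselK \<nu> t
        \<le> (1 + t\<^sup>2 / psi) * (t\<^sup>2 / psi\<^sup>2) powr q * (exp (- (t - s0)) * besselK \<nu> s0)"
      using besselK_decay[OF s0 \<open>s0 \<le> t\<close>] psi by (intro mult_left_mono) simp_all
    also have "\<dots> = besselK \<nu> s0 * exp s0 * G t * exp (- t / 2)"
    proof -
      have "exp (- (t - s0)) = exp s0 * exp (- t / 2) * exp (- t / 2)"
        by (simp flip: exp_add)
      then show ?thesis
        by (simp add: G_def ac_simps)
    qed
    also have "\<dots> \<le> besselK \<nu> s0 * exp s0 * B * exp (- t / 2)"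
      using B[OF \<open>s0 \<le> t\<close>] by (intro mult_right_mono mult_left_mono) (auto simp: besselK_nonneg)
    finally show "(1 + t\<^sup>2 / psi) * (t\<^sup>2 / psi\<^sup>2) powr q * besselK \<nu> t
        \<le> besselK \<nu> s0 * exp s0 * B * exp (- t / 2)" .
  qed
qed

lemma GH_radial_tail:
  assumes chi: "0 < chi" and psi: "0 < psi"
  obtains M where "\<And>\<delta>. 0 \<le> \<delta> \<Longrightarrow>
    (1 + \<delta>) * \<bar>GH_radial d det_sigma lam chi psi \<delta>\<bar> \<le> M * exp (- sqrt (psi * \<delta>) / 2)"
proof -
  define K0 where "K0 = 1 / ((2 * pi) powr (d / 2) * sqrt det_sigma * besselK lam (sqrt (psi * chi)))"
  define q where "q = (lam - d / 2) / 2"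
  define s0 where "s0 = sqrt (chi * psi)"
  have s0: "0 < s0"
    using chi psi by (simp add: s0_def)
  obtain B where "0 \<le> B" and B: "\<And>t. s0 \<le> t \<Longrightarrow>
      (1 + t\<^sup>2 / psi) * (t\<^sup>2 / psi\<^sup>2) powr q * besselK (lam - d / 2) t \<le> B * exp (- t / 2)"
    using besselK_weighted_tail[OF s0 psi] by blast
  show ?thesis
  proof (rule that[of "\<bar>K0\<bar> * B"])
    fix \<delta> :: real assume \<delta>: "0 \<le> \<delta>"
    define t where "t = sqrt ((chi + \<delta>) * psi)"
    have t2: "t\<^sup>2 = (chi + \<delta>) * psi"
      using \<delta> chi psi by (simp add: t_def)
    have "s0 \<le> t"
      using \<delta> psi by (simp add: s0_def t_def mult_right_mono)
    have "sqrt (psi * \<delta>) \<le> t"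
      using \<delta> chi psi by (simp add: t_def algebra_simps)
    have "1 + \<delta> \<le> 1 + t\<^sup>2 / psi"
      using t2 chi psi by (simp add: field_simps)
    have "(1 + \<delta>) * \<bar>GH_radial d det_sigma lam chi psi \<delta>\<bar>
        = \<bar>K0\<bar> * ((1 + \<delta>) * (t\<^sup>2 / psi\<^sup>2) powr q * besselK (lam - d / 2) t)"
      using \<delta> t2 chi psi
      by (simp add: GH_radial_def K0_def q_def t_def abs_mult besselK_nonneg power2_eq_square)
    also have "\<dots> \<le> \<bar>K0\<bar> * ((1 + t\<^sup>2 / psi) * (t\<^sup>2 / psi\<^sup>2) powr q * besselK (lam - d / 2) t)"
      using \<open>1 + \<delta> \<le> 1 + t\<^sup>2 / psi\<close> by (intro mult_left_mono mult_right_mono) (simp_all add: besselK_nonneg)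
    also have "\<dots> \<le> \<bar>K0\<bar> * (B * exp (- sqrt (psi * \<delta>) / 2))"
    proof (rule mult_left_mono)
      have "B * exp (- t / 2) \<le> B * exp (- sqrt (psi * \<delta>) / 2)"
        using \<open>sqrt (psi * \<delta>) \<le> t\<close> \<open>0 \<le> B\<close> by (intro mult_left_mono) auto
      with B[OF \<open>s0 \<le> t\<close>] show "(1 + t\<^sup>2 / psi) * (t\<^sup>2 / psi\<^sup>2) powr q * besselK (lam - d / 2) t
          \<le> B * exp (- sqrt (psi * \<delta>) / 2)"
        by linarith
    qed simp
    finally show "(1 + \<delta>) * \<bar>GH_radial d det_sigma lam chi psi \<delta>\<bar> \<le> \<bar>K0\<bar> * B * exp (- sqrt (psi * \<delta>) / 2)"
      by (simp add: mult.assoc)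
  qed
qed

lemma coercive_norm_bounds:
  fixes y \<mu> :: "'a::real_normed_vector"
  assumes c: "0 < c" and \<delta>: "c * (norm (y - \<mu>))\<^sup>2 \<le> \<delta>"
  shows "1 + (norm y)\<^sup>2 \<le> (1 + 2 * (norm \<mu>)\<^sup>2 + 2 / c) * (1 + \<delta>)"
    and "0 \<le> psi \<Longrightarrow> sqrt (psi * c) / 2 * (norm y - norm \<mu>) \<le> sqrt (psi * \<delta>) / 2"
proof -
  have "0 \<le> \<delta>"
    using \<delta> c by (meson order_trans mult_nonneg_nonneg less_imp_le zero_le_power2)
  have "norm y \<le> norm (y - \<mu>) + norm \<mu>"
    using norm_triangle_ineq[of "y - \<mu>" \<mu>] by simp
  then have "(norm y)\<^sup>2 \<le> (norm (y - \<mu>) + norm \<mu>)\<^sup>2"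
    by (simp add: power_mono)
  also have "\<dots> \<le> 2 * (norm (y - \<mu>))\<^sup>2 + 2 * (norm \<mu>)\<^sup>2"
    using zero_le_power2[of "norm (y - \<mu>) - norm \<mu>"] by (simp add: power2_eq_square algebra_simps)
  also have "\<dots> \<le> 2 / c * \<delta> + 2 * (norm \<mu>)\<^sup>2"
    using \<delta> c by (simp add: field_simps)
  finally have "(norm y)\<^sup>2 \<le> 2 / c * \<delta> + 2 * (norm \<mu>)\<^sup>2" .
  moreover have "2 / c * \<delta> \<le> (1 + 2 * (norm \<mu>)\<^sup>2 + 2 / c) * \<delta>"
    using \<open>0 \<le> \<delta>\<close> by (intro mult_right_mono) simp_all
  moreover have "0 \<le> 2 / c"
    using c by simp
  ultimately show "1 + (norm y)\<^sup>2 \<le> (1 + 2 * (norm \<mu>)\<^sup>2 + 2 / c) * (1 + \<delta>)"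
    unfolding distrib_left mult_1_right by linarith
  assume "0 \<le> psi"
  have "sqrt (psi * c) / 2 * (norm y - norm \<mu>) \<le> sqrt (psi * c) / 2 * norm (y - \<mu>)"
    using norm_triangle_ineq2[of y \<mu>] \<open>0 \<le> psi\<close> c by (intro mult_left_mono) auto
  also have "\<dots> \<le> sqrt (psi * \<delta>) / 2"
    using real_sqrt_le_mono[OF mult_left_mono[OF \<delta> \<open>0 \<le> psi\<close>]] \<open>0 \<le> psi\<close> c
    by (simp add: real_sqrt_mult)
  finally show "sqrt (psi * c) / 2 * (norm y - norm \<mu>) \<le> sqrt (psi * \<delta>) / 2" .
qed

lemma GH_density_tail:
  fixes \<mu> :: "real^'d" and \<Sigma> :: "real^'d^'d"
  assumes \<Sigma>: "sym_pos_def \<Sigma>" and chi: "0 < chi" and psi: "0 < psi"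
  obtains K b where "0 < b"
    and "\<And>y. (1 + (norm y)\<^sup>2) * \<bar>GH_density \<mu> \<Sigma> lam chi psi y\<bar> \<le> K * exp (- b * norm y)"
proof -
  let ?g = "GH_radial (real CARD('d)) (det \<Sigma>) lam chi psi"
  obtain c where c: "0 < c" and coercive: "\<And>x. c * (norm x)\<^sup>2 \<le> x \<bullet> (matrix_inv \<Sigma> *v x)"
    using sym_pos_def_coercive[OF sym_pos_def_matrix_inv[OF \<Sigma>]] by blast
  obtain M where M: "\<And>\<delta>. 0 \<le> \<delta> \<Longrightarrow> (1 + \<delta>) * \<bar>?g \<delta>\<bar> \<le> M * exp (- sqrt (psi * \<delta>) / 2)"
    using GH_radial_tail[OF chi psi] by blast
  have "0 \<le> M"
    using M[of 0] abs_ge_zero order_trans by fastforce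
  define A where "A = 1 + 2 * (norm \<mu>)\<^sup>2 + 2 / c"
  define b where "b = sqrt (psi * c) / 2"
  show ?thesis
  proof (rule that[of b "A * M * exp (b * norm \<mu>)"])
    show "0 < b"
      using psi c by (simp add: b_def)
    fix y :: "real^'d"
    define \<delta> where "\<delta> = (y - \<mu>) \<bullet> (matrix_inv \<Sigma> *v (y - \<mu>))"
    have \<delta>: "c * (norm (y - \<mu>))\<^sup>2 \<le> \<delta>"
      unfolding \<delta>_def by (rule coercive)
    then have "0 \<le> \<delta>"
      using c by (meson order_trans mult_nonneg_nonneg less_imp_le zero_le_power2)
    have "b * norm y - b * norm \<mu> \<le> sqrt (psi * \<delta>) / 2"
      using coercive_norm_bounds(2)[OF c \<delta> less_imp_le[OF psi]] by (simp add: b_def right_diff_distrib)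
    then have expo: "exp (- sqrt (psi * \<delta>) / 2) \<le> exp (b * norm \<mu>) * exp (- b * norm y)"
      by (simp flip: exp_add)
    have "(1 + (norm y)\<^sup>2) * \<bar>GH_density \<mu> \<Sigma> lam chi psi y\<bar> \<le> A * ((1 + \<delta>) * \<bar>?g \<delta>\<bar>)"
      unfolding GH_density_radial \<delta>_def[symmetric] mult.assoc[symmetric] A_def
      using coercive_norm_bounds(1)[OF c \<delta>] by (rule mult_right_mono) simp
    also have "\<dots> \<le> A * (M * (exp (b * norm \<mu>) * exp (- b * norm y)))"
      using M[OF \<open>0 \<le> \<delta>\<close>] mult_left_mono[OF expo \<open>0 \<le> M\<close>] c
      by (intro mult_left_mono) (auto simp: A_def)
    finally show "(1 + (norm y)\<^sup>2) * \<bar>GH_density \<mu> \<Sigma> lam chi psi y\<bar> \<le> A * M * exp (b * norm \<mu>) * exp (- b * norm y)"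
      by (simp add: ac_simps)
  qed
qed

lemma integrable_mult_of_exp_tail:
  fixes f g :: "'a::euclidean_space \<Rightarrow> real"
  assumes [measurable]: "f \<in> borel_measurable borel" "g \<in> borel_measurable borel"
    and b: "0 < b" and tail: "\<And>y. (1 + (norm y)\<^sup>2) * \<bar>f y\<bar> \<le> K * exp (- b * norm y)"
    and g: "\<And>y. \<bar>g y\<bar> \<le> 1 + (norm y)\<^sup>2"
  shows "integrable lborel (\<lambda>y. f y * g y)"
proof (rule Bochner_Integration.integrable_bound)
  show "integrable lborel (\<lambda>y. K * exp (- b * norm (y::'a)))"
    using integrable_exp_neg_norm[OF b, where 'a = 'a] by simp
  show "AE y in lborel. norm (f y * g y) \<le> norm (K * exp (- b * norm y))"
  proof (intro AE_I2)
    fix y :: 'a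
    have "\<bar>f y * g y\<bar> \<le> (1 + (norm y)\<^sup>2) * \<bar>f y\<bar>"
      using mult_right_mono[OF g[of y] abs_ge_zero[of "f y"]] by (simp add: abs_mult mult.commute)
    then show "norm (f y * g y) \<le> norm (K * exp (- b * norm y))"
      using tail[of y] by simp
  qed
qed simp

lemma GH_moments:
  fixes X :: "'a \<Rightarrow> real^'d" and \<Sigma> :: "real^'d^'d"
  assumes law: "distributed M lborel X (\<lambda>y. ennreal (GH_density \<mu> \<Sigma> lam chi psi y))"
    and \<Sigma>: "sym_pos_def \<Sigma>" and det: "0 \<le> det \<Sigma>" and chi: "0 < chi" and psi: "0 < psi"
  shows "integrable M (\<lambda>\<omega>. X \<omega> $ i)" and "integrable M (\<lambda>\<omega>. X \<omega> $ i * X \<omega> $ i')"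
proof -
  let ?f = "GH_density \<mu> \<Sigma> lam chi psi"
  have nonneg: "0 \<le> ?f y" for y
    using det by (simp add: GH_density_radial GH_radial_nonneg)
  have "(\<lambda>y. enn2real (ennreal (?f y))) \<in> borel_measurable lborel"
    using distributed_borel_measurable[OF law] by measurable
  then have f: "?f \<in> borel_measurable borel"
    using nonneg by simp
  obtain K b where b: "0 < b" and tail: "\<And>y. (1 + (norm y)\<^sup>2) * \<bar>?f y\<bar> \<le> K * exp (- b * norm y)"
    using GH_density_tail[OF \<Sigma> chi psi] by blast
  note moment = integrable_mult_of_exp_tail[OF f _ b tail]
  have "\<bar>y $ i\<bar> \<le> 1 + (norm y)\<^sup>2" for y :: "real^'d"
    using component_le_norm_cart[of y i] zero_le_power2[of "norm y - 1"]
    by (simp add: power2_eq_square algebra_simps)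
  with moment[of "\<lambda>y. y $ i"] show "integrable M (\<lambda>\<omega>. X \<omega> $ i)"
    using distributed_integrable[OF law, of "\<lambda>y. y $ i"] nonneg by simp
  have "\<bar>y $ i * y $ i'\<bar> \<le> 1 + (norm y)\<^sup>2" for y :: "real^'d"
  proof -
    have "\<bar>y $ i * y $ i'\<bar> \<le> norm y * norm y"
      unfolding abs_mult by (intro mult_mono component_le_norm_cart) auto
    then show ?thesis
      by (simp add: power2_eq_square)
  qed
  with moment[of "\<lambda>y. y $ i * y $ i'"] show "integrable M (\<lambda>\<omega>. X \<omega> $ i * X \<omega> $ i')"
    using distributed_integrable[OF law, of "\<lambda>y. y $ i * y $ i'"] nonneg by simp
qed

lemma coord_sigma_uniform_measure:
  "coord_sigma (uniform_measure M A) X C = coord_sigma M X C"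
  by (simp add: coord_sigma_def)

theorem proposition1:
  fixes M :: "'a measure"
    and S :: "nat \<Rightarrow> 'a \<Rightarrow> nat"
    and Y :: "nat \<Rightarrow> 'a \<Rightarrow> real^'d"
    and T K t k :: nat
    and \<mu> :: "nat \<Rightarrow> real^'d"
    and \<Sigma> :: "nat \<Rightarrow> real^'d^'d"
    and lam chi psi :: "nat \<Rightarrow> real"
    and j h :: 'd
    and C :: "'d set"
  assumes "prob_space M"
    and "hom_markov_chain M S T K"
    and "\<forall>s\<in>{1..T}. Y s \<in> borel_measurable M"
    and "t \<in> {1..T}" and "k \<in> {1..K}"
    and "measure M {\<omega>\<in>space M. S t \<omega> = k} > 0"
    and "sym_pos_def (\<Sigma> k)" and "det (\<Sigma> k) = 1"
    and "chi k > 0" and "psi k > 0"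
    and "distributed (uniform_measure M {\<omega>\<in>space M. S t \<omega> = k}) lborel (Y t)
           (\<lambda>y. ennreal (GH_density (\<mu> k) (\<Sigma> k) (lam k) (chi k) (psi k) y))"
    and "j \<noteq> h"
    and "C \<subseteq> UNIV - {j, h}"
    and "separates (precision_edge (matrix_inv (\<Sigma> k))) C j h"
  shows "AE \<omega> in uniform_measure M {\<omega>\<in>space M. S t \<omega> = k}.
           cond_cov (uniform_measure M {\<omega>\<in>space M. S t \<omega> = k})
                    (coord_sigma M (Y t) C)
                    (\<lambda>\<omega>. Y t \<omega> $ j) (\<lambda>\<omega>. Y t \<omega> $ h) \<omega> = 0"
proof -
  \<comment> \<open>the Markov chain only makes S t measurable; j \<noteq> h already follows from separation\<close>
  let ?A = "{\<omega>\<in>space M. S t \<omega> = k}"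
  interpret M: prob_space M by fact
  have "S t \<in> measurable M (count_space UNIV)"
    using assms(2,4) by (simp add: hom_markov_chain_def)
  then have "?A \<in> sets M"
    using measurable_sets[of "S t" M "count_space UNIV" "{k}"] by (simp add: vimage_def Int_def conj_commute)
  then have N: "prob_space (uniform_measure M ?A)"
    using assms(6) by (intro prob_space_uniform_measure) (simp_all add: M.emeasure_eq_measure)
  have \<Theta>: "sym_pos_def (matrix_inv (\<Sigma> k))"
    using assms(7) by (rule sym_pos_def_matrix_inv)
  have "j \<notin> C"
    using assms(13) by auto
  note law = assms(11)[unfolded GH_density_radial]
  note moments = GH_moments[OF assms(11,7) _ assms(9,10)]
  have "AE \<omega> in uniform_measure M ?A. cond_cov (uniform_measure M ?A) (coord_sigma (uniform_measure M ?A) (Y t) C)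
      (\<lambda>\<omega>. Y t \<omega> $ j) (\<lambda>\<omega>. Y t \<omega> $ h) \<omega> = 0"
    using assms(8) by (intro elliptical_cond_cov_eq_0[OF N law \<Theta> _ _ assms(14) \<open>j \<notin> C\<close>] moments) simp_all
  then show ?thesis
    by (simp add: coord_sigma_uniform_measure)
qed

end
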